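(* Let $r>0$ and let $f:(0,r)\to(0,\infty)$ be a nondecreasing function such that $f(x)<x$ for all $x\in(0,r)$ and, for every $\alpha>1$, $f(x)=O(x^\alpha)$ as $x\to0^+$. For $x_1\in(0,r)$ let $x_{n+1}=x_n-f(x_n)$ and $S=\{x_n:n\ge1\}$. Then $\dim_BS=1$.
   Context: For a bounded set $S\subset\mathbb{R}$ and $\varepsilon>0$, $S_\varepsilon=\{y: \mathrm{dist}(y,S)<\varepsilon\}$ and $|S_\varepsilon|$ is its Lebesgue measure. $\mathcal M^{*s}(S)=\limsup_{\varepsilon\to0}|S_\varepsilon|/\varepsilon^{1-s}$, $\mathcal M_*^{s}(S)=\liminf_{\varepsilon\to0}|S_\varepsilon|/\varepsilon^{1-s}$; $\overline{\dim}_BS=\inf\{s\ge0:\mathcal M^{*s}(S)=0\}$, $\underline{\dim}_BS=\inf\{s\ge0:\mathcal M_*^{s}(S)=0\}$, and $\dim_BS$ is their common value when equal. *)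

theory Defs
  imports "HOL-Analysis.Analysis" "HOL-Library.Landau_Symbols"
begin

definition nbhd :: "real set \<Rightarrow> real \<Rightarrow> real set" where
  "nbhd S e = {y. infdist y S < e}"

definition upper_mink :: "real \<Rightarrow> real set \<Rightarrow> ereal" where
  "upper_mink s S = Limsup (at_right 0) (\<lambda>e. ereal (measure lborel (nbhd S e) / e powr (1 - s)))"

definition lower_mink :: "real \<Rightarrow> real set \<Rightarrow> ereal" where
  "lower_mink s S = Liminf (at_right 0) (\<lambda>e. ereal (measure lborel (nbhd S e) / e powr (1 - s)))"

definition upper_box_dim :: "real set \<Rightarrow> real" where
  "upper_box_dim S = Inf {s. s \<ge> 0 \<and> upper_mink s S = 0}"

definition lower_box_dim :: "real set \<Rightarrow> real" where
  "lower_box_dim S = Inf {s. s \<ge> 0 \<and> lower_mink s S = 0}"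

definition has_box_dim :: "real set \<Rightarrow> real \<Rightarrow> bool" where
  "has_box_dim S d \<longleftrightarrow> upper_box_dim S = d \<and> lower_box_dim S = d"

end

theory Submission
  imports Defs "HOL-Real_Asymp.Real_Asymp"
begin

(* Let S be the orbit x(n+1) = x(n) - f(x(n)) of a nondecreasing f with 0 < f(t) < t
   that is O(t^alpha) at 0+ for every alpha > 1.  The orbit decreases to 0, so
   dim_B S = 1 follows from two estimates on the Lebesgue measure |S_e| of the
   e-neighbourhood:
   (1) |S_e| -> 0 as e -> 0+, because S_e is covered by N intervals of length 2e
       around the first N points plus an interval of length x(N) + 2e; this gives
       vanishing Minkowski contents for s = 1.
   (2) For s < 1, |S_e| >= e^(1-s) for small e: once f(t) <= t/2, a point y between
       consecutive orbit points x(k+1) < y <= x(k) is within f(x(k)) <= C (2y)^alpha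
       of S; with alpha = 2/(1-s) the whole interval (0, e^(1-s)] lies in S_e.
       Hence the Minkowski contents for s < 1 are positive.
   The file first proves the general criterion turning (1) and (2) into dim_B S = 1,
   then the covering estimate (1) for any nonnegative decreasing null sequence, then
   the orbit-specific estimate (2), and finally the theorem. *)

lemma nbhd_open: "open (nbhd S e)"
  unfolding nbhd_def by (intro open_Collect_less continuous_intros)

lemma nbhd_sets: "nbhd S e \<in> sets lborel"
  using nbhd_open by simp

lemma nbhd_witness:
  assumes "S \<noteq> {}" and "y \<in> nbhd S e"
  shows "\<exists>a\<in>S. dist y a < e"
proof -
  have "Inf (dist y ` S) < e"
    using assms by (simp add: nbhd_def infdist_notempty)
  then show ?thesis
    using cInf_lessD[of "dist y ` S" e] assms(1) by blast
qed

lemma nbhd_fmeasurable: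
  assumes "S \<noteq> {}" and "S \<subseteq> {a..b}"
  shows "nbhd S e \<in> fmeasurable lborel"
proof -
  have "nbhd S e \<subseteq> cbox (a - e) (b + e)"
  proof
    fix y assume "y \<in> nbhd S e"
    then obtain p where p: "p \<in> S" "dist y p < e"
      using nbhd_witness assms(1) by blast
    then have "a \<le> p" "p \<le> b"
      using assms(2) by auto
    then show "y \<in> cbox (a - e) (b + e)"
      using p(2) by (auto simp: dist_real_def)
  qed
  then show ?thesis
    using fmeasurableI2[OF fmeasurable_cbox _ nbhd_sets] by blast
qed

lemma measure_nbhd_ge:
  assumes "S \<noteq> {}" and "S \<subseteq> {a..b}" and "{0<..m} \<subseteq> nbhd S e"
  shows "m \<le> measure lborel (nbhd S e)"
proof -
  have "m \<le> measure lborel {0<..m}"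
    by (cases "0 \<le> m") auto
  also have "\<dots> \<le> measure lborel (nbhd S e)"
    by (rule measure_mono_fmeasurable[OF assms(3) _ nbhd_fmeasurable[OF assms(1,2)]]) simp
  finally show ?thesis .
qed

lemma mink_one_zero:
  assumes "((\<lambda>e. measure lborel (nbhd S e)) \<longlongrightarrow> 0) (at_right 0)"
  shows "upper_mink 1 S = 0" and "lower_mink 1 S = 0"
proof -
  have "\<forall>\<^sub>F e in at_right 0. ereal (measure lborel (nbhd S e)) =
          ereal (measure lborel (nbhd S e) / e powr (1 - 1))"
    using eventually_at_right_less[of 0] by eventually_elim simp
  moreover have "((\<lambda>e. ereal (measure lborel (nbhd S e))) \<longlongrightarrow> ereal 0) (at_right 0)"
    using assms by (simp only: lim_ereal)
  ultimately have lim: "((\<lambda>e. ereal (measure lborel (nbhd S e) / e powr (1 - 1))) \<longlongrightarrow> 0) (at_right 0)"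
    by (simp add: zero_ereal_def tendsto_cong)
  show "upper_mink 1 S = 0"
    unfolding upper_mink_def by (rule lim_imp_Limsup[OF _ lim]) simp
  show "lower_mink 1 S = 0"
    unfolding lower_mink_def by (rule lim_imp_Liminf[OF _ lim]) simp
qed

lemma mink_pos:
  assumes "c > 0"
    and "\<forall>\<^sub>F e in at_right 0. c * e powr (1 - s) \<le> measure lborel (nbhd S e)"
  shows "0 < lower_mink s S" and "0 < upper_mink s S"
proof -
  have "\<forall>\<^sub>F e in at_right 0. ereal c \<le> ereal (measure lborel (nbhd S e) / e powr (1 - s))"
    using assms(2) eventually_at_right_less[of 0]
    by eventually_elim (simp add: pos_le_divide_eq)
  then have "ereal c \<le> lower_mink s S"
    unfolding lower_mink_def by (rule Liminf_bounded)
  moreover have "0 < ereal c"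
    using assms(1) by simp
  ultimately show low: "0 < lower_mink s S"
    by (rule order.strict_trans2[rotated])
  have "lower_mink s S \<le> upper_mink s S"
    unfolding lower_mink_def upper_mink_def by (rule Liminf_le_Limsup) simp
  then show "0 < upper_mink s S"
    using low by simp
qed

lemma has_box_dim_oneI:
  assumes vanish: "((\<lambda>e. measure lborel (nbhd S e)) \<longlongrightarrow> 0) (at_right 0)"
    and lower: "\<And>s. 0 \<le> s \<Longrightarrow> s < 1 \<Longrightarrow>
      \<exists>c>0. \<forall>\<^sub>F e in at_right 0. c * e powr (1 - s) \<le> measure lborel (nbhd S e)"
  shows "has_box_dim S 1"
proof -
  have pos: "0 < lower_mink s S \<and> 0 < upper_mink s S" if "0 \<le> s" "s < 1" for s
    using lower[OF that] mink_pos by blast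
  have "upper_box_dim S = 1"
    unfolding upper_box_dim_def
  proof (rule cInf_eq_minimum)
    show "1 \<in> {s. 0 \<le> s \<and> upper_mink s S = 0}"
      using mink_one_zero(1)[OF vanish] by simp
  qed (use pos in force)
  moreover have "lower_box_dim S = 1"
    unfolding lower_box_dim_def
  proof (rule cInf_eq_minimum)
    show "1 \<in> {s. 0 \<le> s \<and> lower_mink s S = 0}"
      using mink_one_zero(2)[OF vanish] by simp
  qed (use pos in force)
  ultimately show ?thesis
    by (simp add: has_box_dim_def)
qed

lemma Ioc_fmeasurable: "{a<..b::real} \<in> fmeasurable lborel"
  by (rule fmeasurableI2[OF fmeasurable_cbox[of a b]]) auto

text \<open>Covering estimate: near the first N points of a nonnegative decreasing sequence the
  neighbourhood is covered by N intervals of length 2e, the rest lies in (-e, z N + e].\<close>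
lemma measure_nbhd_decseq_le:
  fixes z :: "nat \<Rightarrow> real"
  assumes dec: "decseq z" and nonneg: "\<And>n. 0 \<le> z n" and e: "e > 0"
  shows "measure lborel (nbhd (range z) e) \<le> z N + 2 * e * (real N + 1)"
proof -
  let ?U = "{-e<..z N + e} \<union> (\<Union>n<N. {z n - e<..z n + e})"
  have cover: "nbhd (range z) e \<subseteq> ?U"
  proof
    fix y assume "y \<in> nbhd (range z) e"
    then obtain n where d: "dist y (z n) < e"
      using nbhd_witness by blast
    show "y \<in> ?U"
    proof (cases "n < N")
      case True
      have "y \<in> {z n - e<..z n + e}"
        using d by (auto simp: dist_real_def)
      then show ?thesis using True by blast
    next
      case False
      then have "z n \<le> z N" using dec by (simp add: decseqD)
      then show ?thesis using d nonneg[of n] by (auto simp: dist_real_def)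
    qed
  qed
  have "?U \<in> fmeasurable lborel"
    by (intro fmeasurable.Un fmeasurable.finite_UN Ioc_fmeasurable) simp
  then have "measure lborel (nbhd (range z) e) \<le> measure lborel ?U"
    by (rule measure_mono_fmeasurable[OF cover nbhd_sets])
  also have "\<dots> \<le> measure lborel {-e<..z N + e} + measure lborel (\<Union>n<N. {z n - e<..z n + e})"
    by (intro measure_Un_le sets.finite_UN) simp_all
  also have "\<dots> \<le> measure lborel {-e<..z N + e} + (\<Sum>n<N. measure lborel {z n - e<..z n + e})"
    by (intro add_left_mono measure_UNION_le) simp_all
  also have "\<dots> = (z N + 2 * e) + (\<Sum>n<N. 2 * e)"
    using nonneg[of N] e by simp
  also have "\<dots> = z N + 2 * e * (real N + 1)"
    by (simp add: algebra_simps)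
  finally show ?thesis .
qed

lemma measure_nbhd_decseq_tendsto:
  fixes z :: "nat \<Rightarrow> real"
  assumes dec: "decseq z" and nonneg: "\<And>n. 0 \<le> z n" and lim: "z \<longlonglongrightarrow> 0"
  shows "((\<lambda>e. measure lborel (nbhd (range z) e)) \<longlongrightarrow> 0) (at_right 0)"
proof (rule tendstoI)
  fix \<epsilon> :: real assume "\<epsilon> > 0"
  then obtain N where N: "z N < \<epsilon> / 2"
    using lim nonneg by (metis LIMSEQ_D half_gt_zero le_refl diff_zero real_norm_def abs_less_iff)
  define b where "b = \<epsilon> / (4 * (real N + 1))"
  have "dist (measure lborel (nbhd (range z) e)) 0 < \<epsilon>" if e: "0 < e" "e < b" for e
  proof -
    have "2 * e * (real N + 1) < 2 * b * (real N + 1)"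
      using e by (intro mult_strict_right_mono) auto
    also have "\<dots> = \<epsilon> / 2"
      by (simp add: b_def field_simps)
    finally show ?thesis
      using measure_nbhd_decseq_le[OF dec nonneg e(1), of N] N by simp
  qed
  moreover have "b > 0"
    using \<open>\<epsilon> > 0\<close> by (simp add: b_def)
  ultimately show "\<forall>\<^sub>F e in at_right 0. dist (measure lborel (nbhd (range z) e)) 0 < \<epsilon>"
    by (auto simp: eventually_at_right_field)
qed

lemma powr_below_root:
  fixes C e w \<alpha> :: real
  assumes "C > 0" "e > 0" "\<alpha> > 0" "0 \<le> w" "w < (e / C) powr (1 / \<alpha>)"
  shows "C * w powr \<alpha> < e"
proof -
  have "w powr \<alpha> < ((e / C) powr (1 / \<alpha>)) powr \<alpha>"
    using assms by (intro powr_less_mono2) auto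
  also have "\<dots> = e / C"
    using assms by (simp add: powr_powr)
  finally show ?thesis
    using assms(1) by (simp add: field_simps)
qed

locale subtractive_iteration =
  fixes r :: real and f :: "real \<Rightarrow> real" and z :: "nat \<Rightarrow> real"
  assumes f_pos_less: "\<And>t. t \<in> {0<..<r} \<Longrightarrow> 0 < f t \<and> f t < t"
    and f_mono: "mono_on {0<..<r} f"
    and z_0: "z 0 \<in> {0<..<r}"
    and z_Suc: "\<And>n. z (Suc n) = z n - f (z n)"
begin

lemma z_in: "z n \<in> {0<..<r}"
proof (induction n)
  case 0
  then show ?case using z_0 by simp
next
  case (Suc n)
  then show ?case using f_pos_less[of "z n"] z_Suc[of n] by auto
qed

lemma z_decseq: "decseq z"
  using z_in f_pos_less z_Suc by (intro decseq_SucI) (simp add: less_imp_le)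

lemma range_z_bounds: "range z \<noteq> {}" "range z \<subseteq> {0..r}"
  using z_in by (auto simp: less_imp_le)

text \<open>The orbit gets arbitrarily small: otherwise every step would remove at least f e > 0.\<close>
lemma z_eventually_less:
  assumes "e > 0"
  shows "\<exists>n. z n < e"
proof (rule ccontr)
  assume "\<not> ?thesis"
  then have ge: "e \<le> z n" for n by (simp add: not_less)
  have e_in: "e \<in> {0<..<r}"
    using ge[of 0] z_0 assms by auto
  have step: "f e \<le> f (z n)" for n
    using mono_onD[OF f_mono e_in z_in] ge by blast
  have bound: "z n \<le> z 0 - real n * f e" for n
  proof (induction n)
    case (Suc n)
    then show ?case using z_Suc[of n] step[of n] by (simp add: algebra_simps)
  qed simp
  obtain n where "z 0 < real n * f e"
    using ex_less_of_nat_mult f_pos_less[OF e_in] by blast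
  then show False
    using bound[of n] ge[of n] assms by linarith
qed

lemma z_tendsto_0: "z \<longlonglongrightarrow> 0"
proof (rule LIMSEQ_I)
  fix e :: real assume "e > 0"
  then obtain N where "z N < e" using z_eventually_less by blast
  then have "norm (z n - 0) < e" if "n \<ge> N" for n
    using decseqD[OF z_decseq that] z_in[of n] by simp
  then show "\<exists>N. \<forall>n\<ge>N. norm (z n - 0) < e" by blast
qed

lemma bracket:
  assumes "0 < y" "y \<le> z K"
  shows "\<exists>k\<ge>K. z (Suc k) < y \<and> y \<le> z k"
proof -
  obtain m where "z m < y" using z_eventually_less[OF assms(1)] by blast
  moreover have "\<not> z 0 < y" using decseqD[OF z_decseq, of 0 K] assms by auto
  ultimately obtain k where k: "\<not> z k < y" "z (Suc k) < y"
    using exists_least_lemma[of "\<lambda>n. z n < y"] by blast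
  have "K \<le> k"
  proof (rule ccontr)
    assume "\<not> K \<le> k"
    then show False using decseqD[OF z_decseq, of "Suc k" K] k assms by auto
  qed
  then show ?thesis using k by auto
qed

text \<open>Gap estimate: where f t \<le> t/2, a small point y is within f u of the orbit for some
  orbit point u \<le> 2y, namely the orbit point just above y.\<close>
lemma gap_bound:
  assumes "\<delta> > 0" and half: "\<And>u. u \<in> {0<..<\<delta>} \<Longrightarrow> f u \<le> u / 2"
  shows "\<exists>a>0. \<forall>y\<in>{0<..a}. \<exists>u\<in>{0<..<\<delta>}. u \<le> 2 * y \<and> infdist y (range z) \<le> f u"
proof -
  obtain K where K: "z K < \<delta>" using z_eventually_less[OF assms(1)] by blast
  have "\<exists>u\<in>{0<..<\<delta>}. u \<le> 2 * y \<and> infdist y (range z) \<le> f u" if y: "y \<in> {0<..z K}" for y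
  proof -
    obtain k where k: "K \<le> k" "z (Suc k) < y" "y \<le> z k"
      using bracket y by auto
    have u: "z k \<in> {0<..<\<delta>}"
      using z_in[of k] decseqD[OF z_decseq k(1)] K by auto
    have "infdist y (range z) \<le> z k - y"
      using infdist_le[of "z k" "range z" y] k by (simp add: dist_real_def)
    also have "\<dots> \<le> f (z k)"
      using k z_Suc[of k] by simp
    finally have "infdist y (range z) \<le> f (z k)" .
    moreover have "z k \<le> 2 * y"
      using half[OF u] k z_Suc[of k] by simp
    ultimately show ?thesis
      using u by blast
  qed
  then show ?thesis
    using z_in[of K] by auto
qed

end

locale flat_subtractive_iteration = subtractive_iteration +
  assumes flat: "\<And>\<alpha>. \<alpha> > 1 \<Longrightarrow> f \<in> O[at_right 0](\<lambda>t. t powr \<alpha>)"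
begin

lemma f_powr_bound:
  assumes "\<alpha> > 1"
  shows "\<exists>C>0. \<exists>\<delta>>0. \<forall>u\<in>{0<..<\<delta>}. f u \<le> C * u powr \<alpha>"
proof -
  obtain C where "C > 0" and "\<forall>\<^sub>F t in at_right 0. norm (f t) \<le> C * norm (t powr \<alpha>)"
    using flat[OF assms] by (elim landau_o.bigE)
  then obtain \<delta> where "\<delta> > 0" "\<forall>t>0. t < \<delta> \<longrightarrow> norm (f t) \<le> C * norm (t powr \<alpha>)"
    by (auto simp: eventually_at_right_field)
  then have "f u \<le> C * u powr \<alpha>" if u: "u \<in> {0<..<\<delta>}" for u
    using u by (auto dest!: spec[of _ u] abs_le_D1)
  with \<open>C > 0\<close> \<open>\<delta> > 0\<close> show ?thesis
    by blast
qed

lemma f_half: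
  "\<exists>\<delta>>0. \<forall>u\<in>{0<..<\<delta>}. f u \<le> u / 2"
proof -
  have "(\<lambda>t. t powr 2) \<in> o[at_right 0](\<lambda>t::real. t)"
    by real_asymp
  then have "f \<in> o[at_right 0](\<lambda>t. t)"
    using flat[of 2] by (auto intro: landau_o.big_small_trans)
  then have "\<forall>\<^sub>F t in at_right 0. norm (f t) \<le> 1 / 2 * norm t"
    by (rule landau_o.smallD) simp
  then obtain \<delta> where "\<delta> > 0" "\<forall>t>0. t < \<delta> \<longrightarrow> norm (f t) \<le> 1 / 2 * norm t"
    by (auto simp: eventually_at_right_field)
  then have "f u \<le> u / 2" if u: "u \<in> {0<..<\<delta>}" for u
    using u by (auto dest!: spec[of _ u] abs_le_D1)
  with \<open>\<delta> > 0\<close> show ?thesis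
    by blast
qed

lemma infdist_powr_bound:
  assumes \<alpha>: "\<alpha> > 1"
  shows "\<exists>C>0. \<exists>a>0. \<forall>y\<in>{0<..a}. infdist y (range z) \<le> C * (2 * y) powr \<alpha>"
proof -
  obtain C \<delta>1 where C: "C > 0" "\<delta>1 > 0" and power: "\<forall>u\<in>{0<..<\<delta>1}. f u \<le> C * u powr \<alpha>"
    using f_powr_bound[OF \<alpha>] by blast
  obtain \<delta>2 where "\<delta>2 > 0" and "\<forall>u\<in>{0<..<\<delta>2}. f u \<le> u / 2"
    using f_half by blast
  then obtain a where a: "a > 0" and gap:
      "\<forall>y\<in>{0<..a}. \<exists>u\<in>{0<..<min \<delta>1 \<delta>2}. u \<le> 2 * y \<and> infdist y (range z) \<le> f u"
    using gap_bound[of "min \<delta>1 \<delta>2"] C by auto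
  have "infdist y (range z) \<le> C * (2 * y) powr \<alpha>" if y: "y \<in> {0<..a}" for y
  proof -
    obtain u where u: "u \<in> {0<..<min \<delta>1 \<delta>2}" "u \<le> 2 * y" "infdist y (range z) \<le> f u"
      using bspec[OF gap y] by blast
    have "f u \<le> C * u powr \<alpha>"
      using bspec[OF power, of u] u(1) by simp
    also have "\<dots> \<le> C * (2 * y) powr \<alpha>"
      using u C \<alpha> by (intro mult_left_mono powr_mono2) auto
    finally show ?thesis using u(3) by linarith
  qed
  with C a show ?thesis
    by blast
qed

text \<open>Lower estimate: for every s < 1 the interval (0, e^(1-s)] lies in the e-neighbourhood
  of the orbit for small e, by the gap estimate with \<alpha> = 2/(1-s).\<close>
lemma measure_nbhd_lower:
  assumes s: "0 \<le> s" "s < 1"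
  shows "\<forall>\<^sub>F e in at_right 0. e powr (1 - s) \<le> measure lborel (nbhd (range z) e)"
proof -
  define \<alpha> where "\<alpha> = 2 / (1 - s)"
  have \<alpha>: "\<alpha> > 1" and inv_\<alpha>: "1 / \<alpha> = (1 - s) / 2"
    using s by (auto simp: \<alpha>_def field_simps)
  obtain C a where C: "C > 0" and a: "a > 0"
    and dist: "\<forall>y\<in>{0<..a}. infdist y (range z) \<le> C * (2 * y) powr \<alpha>"
    using infdist_powr_bound[OF \<alpha>] by blast
  have "\<forall>\<^sub>F e in at_right 0. e powr (1 - s) \<le> a"
    using s a by real_asymp
  moreover have "\<forall>\<^sub>F e in at_right 0. e powr (1 - s) \<le> (e / C) powr ((1 - s) / 2) / 4"
    using s C by real_asymp
  ultimately have small: "\<forall>\<^sub>F e in at_right 0. e powr (1 - s) \<le> a \<and>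
      e powr (1 - s) \<le> (e / C) powr ((1 - s) / 2) / 4"
    by (rule eventually_conj)
  show ?thesis
    using small eventually_at_right_less[of 0]
  proof eventually_elim
    case (elim e)
    have "{0<..e powr (1 - s)} \<subseteq> nbhd (range z) e"
    proof
      fix y assume y: "y \<in> {0<..e powr (1 - s)}"
      have "2 * y < (e / C) powr (1 / \<alpha>)"
        using y elim C by (simp add: inv_\<alpha>)
      then have "C * (2 * y) powr \<alpha> < e"
        using powr_below_root[of C e \<alpha> "2 * y"] C elim \<alpha> y by auto
      then show "y \<in> nbhd (range z) e"
        using bspec[OF dist, of y] y elim by (auto simp: nbhd_def)
    qed
    then show ?case
      using measure_nbhd_ge[OF range_z_bounds] by blast
  qed
qed

end

theorem theorem6:
  fixes r :: real and f :: "real \<Rightarrow> real" and x :: "nat \<Rightarrow> real"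
  assumes "r > 0"
    and "\<forall>t\<in>{0<..<r}. 0 < f t \<and> f t < t"
    and "mono_on {0<..<r} f"
    and "\<forall>\<alpha>>1. f \<in> O[at_right 0](\<lambda>t. t powr \<alpha>)"
    and "x 1 \<in> {0<..<r}"
    and "\<forall>n\<ge>1. x (Suc n) = x n - f (x n)"
  shows "has_box_dim (x ` {1..}) 1"
proof -
  define z where "z n = x (Suc n)" for n
  interpret flat_subtractive_iteration r f z
    by unfold_locales (use assms in \<open>auto simp: z_def\<close>)
  have orbit: "x ` {1..} = range z"
  proof
    show "x ` {1..} \<subseteq> range z"
    proof
      fix y assume "y \<in> x ` {1..}"
      then obtain n where "n \<ge> 1" "y = x n" by auto
      then have "y = z (n - 1)" by (simp add: z_def)
      then show "y \<in> range z" by simp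
    qed
  qed (auto simp: z_def)
  show ?thesis
    unfolding orbit
  proof (rule has_box_dim_oneI)
    show "((\<lambda>e. measure lborel (nbhd (range z) e)) \<longlongrightarrow> 0) (at_right 0)"
      using measure_nbhd_decseq_tendsto[OF z_decseq _ z_tendsto_0] z_in by (simp add: less_imp_le)
    show "\<exists>c>0. \<forall>\<^sub>F e in at_right 0. c * e powr (1 - s) \<le> measure lborel (nbhd (range z) e)"
      if "0 \<le> s" "s < 1" for s
      using measure_nbhd_lower[OF that] by (intro exI[of _ 1]) simp
  qed
qed

end
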